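(* Let $G$ be a finite simple graph with a fixed total order on $E(G)$ and fix $\pi\in B_G$. Write $\nabla_G(\pi)=\{e_1<\dots<e_m\}$. Then \[\sum_{\sigma\in B_G,\ \sigma\supseteq\pi}(-1)^{\ell(\sigma)}=(-1)^{|C(G)|}\cdot N,\] where $N$ is the number of inclusion-wise maximal elements $T\in B_G$ with $T\supseteq\pi$ such that (if $m\ge1$) $e_1\notin T$, and for every $j>1$ with $e_j\in T$ there exists $i<j$ with $e_i\notin T$ such that $e_j$ lies on the unique cycle of $\mathcal{G}(T\cup\{e_i\})$ (the fundamental cycle of $e_i$ with respect to $T$).
   Context: A broken circuit is the edge set of a cycle of $G$ with its smallest edge removed; $B_G$ is the set of all $S\subseteq E(G)$ containing no broken circuit (each such $S$ is the edge set of a forest). For $S\subseteq E(G)$, $\mathcal{G}(S)=(V(G),S)$, $\ell(S)$ is the number of connected components of $\mathcal{G}(S)$, and $\nabla_G(S)$ is the set of edges of $G$ whose endpoints lie in different connected components of $\mathcal{G}(S)$. $|C(G)|$ is the number of connected components of $G$. *)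

theory Defs
  imports Main
begin

definition simple_graph :: "'a set \<Rightarrow> 'a set set \<Rightarrow> bool" where
  "simple_graph V E \<longleftrightarrow> finite V \<and> (\<forall>e\<in>E. e \<subseteq> V \<and> card e = 2)"

text \<open>A fixed total order on E(G), given by an injective ranking: e < f iff rk e < rk f.\<close>
definition edge_order :: "'a set set \<Rightarrow> ('a set \<Rightarrow> nat) \<Rightarrow> bool" where
  "edge_order E rk \<longleftrightarrow> inj_on rk E"

definition is_cycle :: "'a set \<Rightarrow> 'a set set \<Rightarrow> 'a set set \<Rightarrow> bool" where
  "is_cycle V E C \<longleftrightarrow> (\<exists>vs. length vs \<ge> 3 \<and> distinct vs \<and> set vs \<subseteq> V \<and>
      C = {{vs ! i, vs ! ((i + 1) mod length vs)} | i. i < length vs} \<and> C \<subseteq> E)"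

definition min_edge :: "('a set \<Rightarrow> nat) \<Rightarrow> 'a set set \<Rightarrow> 'a set" where
  "min_edge rk C = (THE e. e \<in> C \<and> (\<forall>f\<in>C. rk e \<le> rk f))"

definition broken_circuit :: "'a set \<Rightarrow> 'a set set \<Rightarrow> ('a set \<Rightarrow> nat) \<Rightarrow> 'a set set \<Rightarrow> bool" where
  "broken_circuit V E rk D \<longleftrightarrow> (\<exists>C. is_cycle V E C \<and> D = C - {min_edge rk C})"

text \<open>B_G: subsets of E(G) containing no broken circuit.\<close>
definition NBC :: "'a set \<Rightarrow> 'a set set \<Rightarrow> ('a set \<Rightarrow> nat) \<Rightarrow> 'a set set set" where
  "NBC V E rk = {S. S \<subseteq> E \<and> (\<forall>D. broken_circuit V E rk D \<longrightarrow> \<not> D \<subseteq> S)}"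

definition conn :: "'a set \<Rightarrow> 'a set set \<Rightarrow> ('a \<times> 'a) set" where
  "conn V S = {(u, v). u \<in> V \<and> v \<in> V \<and> (u, v) \<in> ({(x, y). {x, y} \<in> S})\<^sup>*}"

text \<open>\<ell>(S): number of connected components of (V,S).\<close>
definition ncomp :: "'a set \<Rightarrow> 'a set set \<Rightarrow> nat" where
  "ncomp V S = card (V // conn V S)"

definition nabla :: "'a set \<Rightarrow> 'a set set \<Rightarrow> 'a set set \<Rightarrow> 'a set set" where
  "nabla V E S = {e \<in> E. \<exists>u v. e = {u, v} \<and> (u, v) \<notin> conn V S}"

definition max_NBC_above :: "'a set \<Rightarrow> 'a set set \<Rightarrow> ('a set \<Rightarrow> nat) \<Rightarrow> 'a set set \<Rightarrow> 'a set set \<Rightarrow> bool" where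
  "max_NBC_above V E rk \<pi> T \<longleftrightarrow> T \<in> NBC V E rk \<and> \<pi> \<subseteq> T \<and>
     (\<forall>T'. T' \<in> NBC V E rk \<and> \<pi> \<subseteq> T' \<and> T \<subseteq> T' \<longrightarrow> T' = T)"

definition on_fund_cycle :: "'a set \<Rightarrow> 'a set set \<Rightarrow> 'a set set \<Rightarrow> 'a set \<Rightarrow> 'a set \<Rightarrow> bool" where
  "on_fund_cycle V E T f e \<longleftrightarrow> (\<exists>C. is_cycle V E C \<and> C \<subseteq> T \<union> {f} \<and> e \<in> C)"

definition good_T :: "'a set \<Rightarrow> 'a set set \<Rightarrow> ('a set \<Rightarrow> nat) \<Rightarrow> 'a set set \<Rightarrow> 'a set set \<Rightarrow> bool" where
  "good_T V E rk \<pi> T \<longleftrightarrow>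
     (nabla V E \<pi> \<noteq> {} \<longrightarrow> min_edge rk (nabla V E \<pi>) \<notin> T) \<and>
     (\<forall>ej \<in> nabla V E \<pi>. ej \<noteq> min_edge rk (nabla V E \<pi>) \<and> ej \<in> T \<longrightarrow>
        (\<exists>ei \<in> nabla V E \<pi>. rk ei < rk ej \<and> ei \<notin> T \<and> on_fund_cycle V E T ei ej))"

end

theory Submission
  imports Defs "HOL-Library.Disjoint_Sets"
begin

text \<open>The sum is evaluated by a sign-reversing involution on the NBC sets \<sigma> \<supseteq> \<pi>. Call an
  edge k \<in> \<nabla>(\<pi>) a pivot of \<sigma> if either \<sigma> + k is still NBC, or k \<in> \<sigma> and k lies on
  no fundamental cycle of a smaller edge of \<nabla>(\<pi>) outside \<sigma>. Toggling the smallest pivot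
  changes the number of components by one and keeps it the smallest pivot, so these
  terms cancel in pairs. The \<sigma> without pivots are exactly the counted maximal sets T;
  such a T connects the endpoints of every edge of G, so \<ell>(T) = |C(G)|.\<close>

definition edge_rel :: "'a set set \<Rightarrow> ('a \<times> 'a) set" where
  "edge_rel S = {(x, y). {x, y} \<in> S}"

definition connects :: "'a set set \<Rightarrow> 'a set \<Rightarrow> bool" where
  "connects S e \<longleftrightarrow> (\<forall>u v. e = {u, v} \<longrightarrow> (u, v) \<in> (edge_rel S)\<^sup>*)"

lemma converse_edge_rel [simp]: "(edge_rel S)\<inverse> = edge_rel S"
  by (auto simp: edge_rel_def insert_commute)

lemma rtrancl_edge_rel_sym: "(x, y) \<in> (edge_rel S)\<^sup>* \<Longrightarrow> (y, x) \<in> (edge_rel S)\<^sup>*"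
  using rtrancl_converseI[of x y "edge_rel S"] by simp

lemma rtrancl_edge_rel_mono: "S \<subseteq> T \<Longrightarrow> (edge_rel S)\<^sup>* \<subseteq> (edge_rel T)\<^sup>*"
  by (rule rtrancl_mono) (auto simp: edge_rel_def)

lemma connects_doubleton_iff: "connects S {u, v} \<longleftrightarrow> (u, v) \<in> (edge_rel S)\<^sup>*"
  unfolding connects_def by (auto simp: doubleton_eq_iff intro: rtrancl_edge_rel_sym)

lemma connects_mono: "connects S e \<Longrightarrow> S \<subseteq> T \<Longrightarrow> connects T e"
  using rtrancl_edge_rel_mono unfolding connects_def by blast

lemma connects_if_mem: "e \<in> S \<Longrightarrow> connects S e"
  unfolding connects_def edge_rel_def by auto

lemma rtrancl_edge_rel_insert_connected:
  assumes "connects S e"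
  shows "(edge_rel (insert e S))\<^sup>* = (edge_rel S)\<^sup>*"
proof
  have "edge_rel (insert e S) \<subseteq> (edge_rel S)\<^sup>*"
    using assms by (auto simp: edge_rel_def connects_def)
  then show "(edge_rel (insert e S))\<^sup>* \<subseteq> (edge_rel S)\<^sup>*"
    using rtrancl_subset_rtrancl by blast
qed (rule rtrancl_edge_rel_mono, blast)

lemma connects_insertD: "connects (insert e S) f \<Longrightarrow> connects S e \<Longrightarrow> connects S f"
  by (simp add: connects_def rtrancl_edge_rel_insert_connected)

lemma rtrancl_edge_rel_insertE:
  assumes "(x, y) \<in> (edge_rel (insert {a, b} S))\<^sup>*"
  obtains "(x, y) \<in> (edge_rel S)\<^sup>*"
    | "(x, a) \<in> (edge_rel S)\<^sup>*" "(b, y) \<in> (edge_rel S)\<^sup>*"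
    | "(x, b) \<in> (edge_rel S)\<^sup>*" "(a, y) \<in> (edge_rel S)\<^sup>*"
  using assms
proof (induction arbitrary: thesis rule: rtrancl_induct)
  case (step y z)
  have "(y, z) \<in> (edge_rel S)\<^sup>* \<or> (y, z) = (a, b) \<or> (y, z) = (b, a)"
    using step.hyps(2) by (auto simp: edge_rel_def doubleton_eq_iff)
  then show ?case
  proof (elim disjE)
    assume "(y, z) \<in> (edge_rel S)\<^sup>*"
    then show ?thesis
      using step.IH step.prems by (meson rtrancl_trans)
  next
    assume "(y, z) = (a, b)"
    then show ?thesis
      using step.IH step.prems by blast
  next
    assume "(y, z) = (b, a)"
    then show ?thesis
      using step.IH step.prems by blast
  qed
qed simp

lemma rtrancl_edge_rel_imp_path:
  assumes "(u, v) \<in> (edge_rel S)\<^sup>*"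
  shows "\<exists>vs. vs \<noteq> [] \<and> hd vs = u \<and> last vs = v \<and> distinct vs
           \<and> (\<forall>i. Suc i < length vs \<longrightarrow> {vs ! i, vs ! Suc i} \<in> S)"
  using assms
proof (induction rule: rtrancl_induct)
  case base
  show ?case by (intro exI[of _ "[u]"]) auto
next
  case (step y z)
  then obtain vs where vs: "vs \<noteq> []" "hd vs = u" "last vs = y" "distinct vs"
    "\<forall>i. Suc i < length vs \<longrightarrow> {vs ! i, vs ! Suc i} \<in> S" by blast
  show ?case
  proof (cases "z \<in> set vs")
    case True
    then obtain j where "j < length vs" "vs ! j = z" by (auto simp: in_set_conv_nth)
    then show ?thesis
      using vs by (intro exI[of _ "take (Suc j) vs"]) (auto simp: hd_conv_nth last_conv_nth)
  next
    case False
    have "{y, z} \<in> S" using step.hyps(2) by (simp add: edge_rel_def)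
    then have "\<forall>i. Suc i < length (vs @ [z]) \<longrightarrow> {(vs @ [z]) ! i, (vs @ [z]) ! Suc i} \<in> S"
      using vs by (auto simp: nth_append last_conv_nth less_Suc_eq dest: sym)
    then show ?thesis using vs False by (intro exI[of _ "vs @ [z]"]) auto
  qed
qed

definition cycle_edges :: "'a list \<Rightarrow> 'a set set" where
  "cycle_edges vs = {{vs ! i, vs ! ((i + 1) mod length vs)} | i. i < length vs}"

lemma is_cycle_iff_cycle_edges:
  "is_cycle V E C \<longleftrightarrow>
     (\<exists>vs. 3 \<le> length vs \<and> distinct vs \<and> set vs \<subseteq> V \<and> C = cycle_edges vs \<and> C \<subseteq> E)"
  by (simp add: is_cycle_def cycle_edges_def)

lemma mod_add_neq_self:
  fixes i k n :: nat
  assumes "i < n" "0 < k" "k < n"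
  shows "(i + k) mod n \<noteq> i"
proof (cases "i + k < n")
  case False
  then have "(i + k) mod n = i + k - n"
    using assms by (simp add: le_mod_geq)
  then show ?thesis using False assms by simp
qed (use assms in simp)

lemma cycle_edge_eq_iff:
  assumes vs: "distinct vs" "3 \<le> length vs" and "a < length vs" "i < length vs"
  shows "{vs ! a, vs ! ((a + 1) mod length vs)} = {vs ! i, vs ! ((i + 1) mod length vs)}
           \<longleftrightarrow> a = i"
proof
  let ?n = "length vs"
  assume eq: "{vs ! a, vs ! ((a + 1) mod ?n)} = {vs ! i, vs ! ((i + 1) mod ?n)}"
  have "0 < ?n"
    using assms by linarith
  then have mod_lt: "(a + 1) mod ?n < ?n" "(i + 1) mod ?n < ?n"
    by (simp_all only: mod_less_divisor)
  show "a = i"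
  proof (rule ccontr)
    assume "a \<noteq> i"
    then have "vs ! a \<noteq> vs ! i"
      using assms by (simp add: nth_eq_iff_index_eq)
    then have "vs ! a = vs ! ((i + 1) mod ?n)" "vs ! ((a + 1) mod ?n) = vs ! i"
      using eq by (auto simp: doubleton_eq_iff)
    then have "a = (i + 1) mod ?n" "(a + 1) mod ?n = i"
      using assms mod_lt by (simp_all add: nth_eq_iff_index_eq)
    then have "(i + 2) mod ?n = i"
      by (simp add: mod_Suc_eq)
    then show False
      using mod_add_neq_self[of i ?n 2] assms by simp
  qed
qed simp

lemma cycle_edges_minus_connects:
  assumes vs: "distinct vs" "3 \<le> length vs" and f: "f \<in> cycle_edges vs"
  shows "connects (cycle_edges vs - {f}) f"
proof -
  let ?n = "length vs" and ?R = "edge_rel (cycle_edges vs - {f})"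
  obtain i where i: "i < ?n" "f = {vs ! i, vs ! ((i + 1) mod ?n)}"
    using f by (auto simp: cycle_edges_def)
  have step: "(vs ! a, vs ! ((a + 1) mod ?n)) \<in> ?R" if "a < ?n" "a \<noteq> i" for a
    using that cycle_edge_eq_iff[OF vs that(1) i(1)] i
    by (auto simp: edge_rel_def cycle_edges_def)
  have walk: "(vs ! ((i + 1) mod ?n), vs ! ((i + 1 + d) mod ?n)) \<in> ?R\<^sup>*" if "d < ?n" for d
    using that
  proof (induction d)
    case (Suc d)
    let ?a = "(i + 1 + d) mod ?n"
    have "?a < ?n"
      using i(1) by (metis mod_less_divisor not_less0 gr0I)
    moreover have "?a \<noteq> i"
      using mod_add_neq_self[of i ?n "Suc d"] i Suc.prems by simp
    ultimately have "(vs ! ?a, vs ! ((?a + 1) mod ?n)) \<in> ?R"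
      by (rule step)
    moreover have "(?a + 1) mod ?n = (i + 1 + Suc d) mod ?n"
      by (simp add: mod_Suc_eq)
    ultimately show ?case
      using Suc by (metis Suc_lessD rtrancl_into_rtrancl)
  qed simp
  have "i + 1 + (?n - 1) = i + ?n"
    using i by linarith
  then have "(i + 1 + (?n - 1)) mod ?n = i"
    using i by simp
  then have "(vs ! ((i + 1) mod ?n), vs ! i) \<in> ?R\<^sup>*"
    using walk[of "?n - 1"] i by simp
  then show ?thesis
    using i(2) by (simp add: connects_doubleton_iff rtrancl_edge_rel_sym)
qed

lemma cycle_minus_connects: "is_cycle V E C \<Longrightarrow> f \<in> C \<Longrightarrow> connects (C - {f}) f"
  unfolding is_cycle_iff_cycle_edges using cycle_edges_minus_connects by blast

lemma path_closes_to_cycle: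
  assumes vs: "3 \<le> length vs" and path: "\<forall>i. Suc i < length vs \<longrightarrow> {vs ! i, vs ! Suc i} \<in> S"
  shows "cycle_edges vs \<subseteq> insert {last vs, hd vs} S" "{last vs, hd vs} \<in> cycle_edges vs"
proof -
  let ?n = "length vs"
  have n: "?n - 1 + 1 = ?n" "vs \<noteq> []"
    using vs by auto
  have last_edge: "{vs ! (?n - 1), vs ! ((?n - 1 + 1) mod ?n)} = {last vs, hd vs}"
    unfolding n(1) using n(2) by (simp add: last_conv_nth hd_conv_nth)
  show "{last vs, hd vs} \<in> cycle_edges vs"
    unfolding cycle_edges_def mem_Collect_eq
    by (rule exI[of _ "?n - 1"]) (use last_edge n in auto)
  show "cycle_edges vs \<subseteq> insert {last vs, hd vs} S"
  proof
    fix c assume "c \<in> cycle_edges vs"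
    then obtain i where i: "i < ?n" "c = {vs ! i, vs ! ((i + 1) mod ?n)}"
      by (auto simp: cycle_edges_def)
    show "c \<in> insert {last vs, hd vs} S"
    proof (cases "Suc i < ?n")
      case True
      then show ?thesis using i path by simp
    next
      case False
      then have "i = ?n - 1" using i by simp
      then show ?thesis using i last_edge by simp
    qed
  qed
qed

lemma set_subset_Union_cycle_edges: "set vs \<subseteq> \<Union> (cycle_edges vs)"
proof
  fix x assume "x \<in> set vs"
  then obtain i where "i < length vs" "x = vs ! i"
    by (auto simp: in_set_conv_nth)
  then show "x \<in> \<Union> (cycle_edges vs)"
    by (auto simp: cycle_edges_def)
qed

definition component :: "'a set \<Rightarrow> 'a set set \<Rightarrow> 'a \<Rightarrow> 'a set" where
  "component V S x = {y \<in> V. (x, y) \<in> (edge_rel S)\<^sup>*}"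

lemma conn_eq: "conn V S = {(u, v). u \<in> V \<and> v \<in> V \<and> (u, v) \<in> (edge_rel S)\<^sup>*}"
  by (simp add: conn_def edge_rel_def)

lemma ncomp_eq_card_components: "ncomp V S = card (component V S ` V)"
proof -
  have "V // conn V S = component V S ` V"
    by (auto simp: quotient_def conn_eq component_def)
  then show ?thesis by (simp add: ncomp_def)
qed

lemma component_self: "x \<in> V \<Longrightarrow> x \<in> component V S x"
  by (simp add: component_def)

lemma component_eq: "y \<in> component V S x \<Longrightarrow> component V S y = component V S x"
  unfolding component_def by (auto intro: rtrancl_trans rtrancl_edge_rel_sym)

lemma component_insert_edge:
  fixes V :: "'a set" and S :: "'a set set" and a b :: 'a
  defines "A \<equiv> component V S a" and "B \<equiv> component V S b"
  assumes x: "x \<in> V"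
  shows "component V (insert {a, b} S) x
           = (if x \<in> A \<union> B then A \<union> B else component V S x)"
proof -
  let ?R = "(edge_rel S)\<^sup>*" and ?R' = "(edge_rel (insert {a, b} S))\<^sup>*"
  have sub: "?R \<subseteq> ?R'"
    by (rule rtrancl_edge_rel_mono) blast
  have ab: "(a, b) \<in> ?R'" "(b, a) \<in> ?R'"
    by (auto simp: edge_rel_def insert_commute)
  show ?thesis
  proof (cases "x \<in> A \<union> B")
    case True
    then have xab: "(a, x) \<in> ?R \<or> (b, x) \<in> ?R"
      by (auto simp: A_def B_def component_def)
    have "y \<in> A \<union> B" if "y \<in> V" "(x, y) \<in> ?R'" for y
    proof -
      from that(2) have "(a, y) \<in> ?R \<or> (b, y) \<in> ?R"
      proof (cases rule: rtrancl_edge_rel_insertE)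
        case 1
        then show ?thesis using xab by (meson rtrancl_trans)
      qed auto
      then show ?thesis
        using that(1) by (auto simp: A_def B_def component_def)
    qed
    moreover have "(x, y) \<in> ?R'" if "y \<in> A \<union> B" for y
    proof -
      have "(x, a) \<in> ?R' \<or> (x, b) \<in> ?R'"
        using xab sub by (metis rtrancl_edge_rel_sym subsetD)
      moreover have "(a, y) \<in> ?R' \<or> (b, y) \<in> ?R'"
        using that sub by (auto simp: A_def B_def component_def)
      ultimately show ?thesis
        using ab by (meson rtrancl_trans)
    qed
    ultimately show ?thesis
      using True by (auto simp: A_def B_def component_def)
  next
    case False
    then have "(x, a) \<notin> ?R" "(x, b) \<notin> ?R"
      using x rtrancl_edge_rel_sym[of x a S] rtrancl_edge_rel_sym[of x b S]
      by (auto simp: A_def B_def component_def)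
    then have "(x, y) \<in> ?R' \<longleftrightarrow> (x, y) \<in> ?R" for y
      using sub by (metis rtrancl_edge_rel_insertE subsetD)
    then show ?thesis
      using False by (simp add: component_def)
  qed
qed

lemma components_insert_edge:
  fixes V :: "'a set" and S :: "'a set set" and a b :: 'a
  defines "A \<equiv> component V S a" and "B \<equiv> component V S b"
  assumes "a \<in> V"
  shows "component V (insert {a, b} S) ` V = insert (A \<union> B) (component V S ` V - {A, B})"
proof -
  have outside: "x \<notin> A \<union> B \<longleftrightarrow> component V S x \<noteq> A \<and> component V S x \<noteq> B" if "x \<in> V" for x
    using component_self[OF that, of S] component_eq[of x V S a] component_eq[of x V S b]
    unfolding A_def B_def by auto
  have a: "a \<in> A"
    unfolding A_def using assms(3) by (rule component_self)
  show ?thesis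
  proof (intro equalityI subsetI)
    fix c assume "c \<in> component V (insert {a, b} S) ` V"
    then obtain x where "x \<in> V" "c = component V (insert {a, b} S) x"
      by blast
    then show "c \<in> insert (A \<union> B) (component V S ` V - {A, B})"
      using component_insert_edge[where S = S and a = a and b = b] outside
      by (cases "x \<in> A \<union> B") (simp_all flip: A_def B_def)
  next
    fix c assume c: "c \<in> insert (A \<union> B) (component V S ` V - {A, B})"
    show "c \<in> component V (insert {a, b} S) ` V"
    proof (cases "c = A \<union> B")
      case True
      then show ?thesis
        using component_insert_edge[where S = S and a = a and b = b, OF assms(3)] a assms(3)
        by (simp flip: A_def B_def) (metis image_eqI)
    next
      case False
      then obtain x where "x \<in> V" "c = component V S x" "c \<noteq> A" "c \<noteq> B"
        using c by blast
      then show ?thesis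
        using component_insert_edge[where S = S and a = a and b = b] outside
        by (simp flip: A_def B_def)
    qed
  qed
qed

lemma ncomp_insert_edge:
  assumes "finite V" "a \<in> V" "b \<in> V" "(a, b) \<notin> (edge_rel S)\<^sup>*"
  shows "ncomp V S = Suc (ncomp V (insert {a, b} S))"
proof -
  define A where "A = component V S a"
  define B where "B = component V S b"
  let ?Q = "component V S ` V"
  have in_Q: "A \<in> ?Q" "B \<in> ?Q"
    using assms by (auto simp: A_def B_def)
  have "b \<in> B" "b \<notin> A"
    using assms by (auto simp: A_def B_def component_def)
  then have "A \<noteq> B" by blast
  have "A \<union> B \<notin> ?Q"
  proof
    assume "A \<union> B \<in> ?Q"
    then obtain x where "A \<union> B = component V S x"
      by blast
    then have "A = component V S x" "B = component V S x"
      using assms component_eq component_self unfolding A_def B_def by (metis UnI1 UnI2)+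
    with \<open>A \<noteq> B\<close> show False by simp
  qed
  moreover have "finite ?Q"
    using assms by simp
  moreover have "card {A, B} \<le> card ?Q"
    using in_Q \<open>finite ?Q\<close> by (intro card_mono) auto
  ultimately show ?thesis
    using components_insert_edge[where S = S and b = b, OF assms(2)] in_Q \<open>A \<noteq> B\<close>
    by (simp add: ncomp_eq_card_components A_def B_def card_Diff_subset)
qed

locale ordered_graph =
  fixes V :: "'a set" and E :: "'a set set" and rk :: "'a set \<Rightarrow> nat"
  assumes simple: "simple_graph V E" and order: "edge_order E rk"
begin

lemma finite_V: "finite V"
  using simple by (simp add: simple_graph_def)

lemma edges_subset_Pow: "E \<subseteq> Pow V"
  using simple by (auto simp: simple_graph_def)

lemma finite_E: "finite E"
  using edges_subset_Pow finite_V by (meson finite_Pow_iff finite_subset)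

lemma edgeE:
  assumes "e \<in> E"
  obtains u v where "e = {u, v}" "u \<noteq> v" "u \<in> V" "v \<in> V"
  using assms simple card_2_iff[of e] by (auto simp: simple_graph_def)

lemma nabla_iff:
  assumes "e \<in> E"
  shows "e \<in> nabla V E S \<longleftrightarrow> \<not> connects S e"
  using assms
proof (rule edgeE)
  fix u v assume uv: "e = {u, v}" "u \<in> V" "v \<in> V"
  have "e \<in> nabla V E S \<longleftrightarrow> (\<exists>a b. {u, v} = {a, b} \<and> (a, b) \<notin> conn V S)"
    using assms uv by (simp add: nabla_def)
  also have "\<dots> \<longleftrightarrow> (u, v) \<notin> (edge_rel S)\<^sup>*"
    using uv rtrancl_edge_rel_sym[of u v S] rtrancl_edge_rel_sym[of v u S]
    by (auto simp: doubleton_eq_iff conn_eq)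
  finally show ?thesis
    using uv by (simp add: connects_doubleton_iff)
qed

lemma NBC_subset: "S \<in> NBC V E rk \<Longrightarrow> S \<subseteq> E"
  by (simp add: NBC_def)

lemma NBC_subset_closed: "T \<in> NBC V E rk \<Longrightarrow> S \<subseteq> T \<Longrightarrow> S \<in> NBC V E rk"
  unfolding NBC_def by blast

lemma cycle_not_subset_NBC: "is_cycle V E C \<Longrightarrow> S \<in> NBC V E rk \<Longrightarrow> \<not> C \<subseteq> S"
  unfolding NBC_def broken_circuit_def by blast

lemma min_edge_eqI:
  assumes "e \<in> A" "\<And>f. f \<in> A \<Longrightarrow> rk e \<le> rk f" "A \<subseteq> E"
  shows "min_edge rk A = e"
  unfolding min_edge_def
proof (rule the_equality)
  fix x assume x: "x \<in> A \<and> (\<forall>f\<in>A. rk x \<le> rk f)"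
  then have "rk x = rk e"
    using assms by (meson antisym)
  then show "x = e"
    using order assms x by (auto simp: edge_order_def dest: inj_onD)
qed (use assms in simp)

lemma
  assumes "finite A" "A \<noteq> {}" "A \<subseteq> E"
  shows min_edge_mem: "min_edge rk A \<in> A"
    and min_edge_le: "f \<in> A \<Longrightarrow> rk (min_edge rk A) \<le> rk f"
proof -
  have "Min (rk ` A) \<in> rk ` A"
    using assms by simp
  then obtain e where e: "e \<in> A" "rk e = Min (rk ` A)"
    by auto
  then have "min_edge rk A = e"
    using assms by (intro min_edge_eqI) auto
  then show "min_edge rk A \<in> A" "f \<in> A \<Longrightarrow> rk (min_edge rk A) \<le> rk f"
    using e assms by auto
qed

lemma connects_imp_cycle:
  assumes S: "S \<subseteq> E" and e: "e \<in> E" "e \<notin> S" "connects S e"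
  obtains C where "is_cycle V E C" "C \<subseteq> insert e S" "e \<in> C"
proof -
  obtain u v where uv: "e = {u, v}" "u \<noteq> v"
    using e(1) by (rule edgeE)
  obtain vs where vs: "vs \<noteq> []" "hd vs = v" "last vs = u" "distinct vs"
    and path: "\<forall>i. Suc i < length vs \<longrightarrow> {vs ! i, vs ! Suc i} \<in> S"
    using rtrancl_edge_rel_imp_path[of v u S] e(3) uv
    by (auto simp: connects_doubleton_iff intro: rtrancl_edge_rel_sym)
  have "length vs \<noteq> 0" "length vs \<noteq> 1"
    using vs uv(2) by (auto simp: length_Suc_conv)
  moreover have "length vs \<noteq> 2"
  proof
    assume "length vs = 2"
    then have "{vs ! 0, vs ! 1} = e"
      using vs uv(1) by (auto simp: hd_conv_nth last_conv_nth)
    then show False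
      using path e(2) \<open>length vs = 2\<close> by auto
  qed
  ultimately have "3 \<le> length vs"
    by linarith
  note cyc = path_closes_to_cycle[OF this path]
  have "{last vs, hd vs} = e"
    using vs uv by auto
  then have "cycle_edges vs \<subseteq> insert e S" "e \<in> cycle_edges vs"
    using cyc by simp_all
  moreover have "set vs \<subseteq> V"
    using set_subset_Union_cycle_edges[of vs] calculation S e(1) edges_subset_Pow by blast
  moreover have "cycle_edges vs \<subseteq> E"
    using calculation S e(1) by blast
  ultimately have "is_cycle V E (cycle_edges vs)"
    unfolding is_cycle_iff_cycle_edges using \<open>3 \<le> length vs\<close> vs(4) by blast
  then show ?thesis
    using that \<open>cycle_edges vs \<subseteq> insert e S\<close> \<open>e \<in> cycle_edges vs\<close> by blast
qed

lemma NBC_insert_imp_not_connects: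
  assumes "insert e S \<in> NBC V E rk" "e \<notin> S"
  shows "\<not> connects S e"
proof
  assume "connects S e"
  moreover have "S \<subseteq> E" "e \<in> E"
    using NBC_subset[OF assms(1)] by auto
  ultimately obtain C where "is_cycle V E C" "C \<subseteq> insert e S"
    using assms(2) connects_imp_cycle by blast
  then show False
    using assms(1) cycle_not_subset_NBC by blast
qed

lemma ncomp_insert_unconnected:
  assumes "e \<in> E" "\<not> connects S e"
  shows "ncomp V S = Suc (ncomp V (insert e S))"
  using assms(1)
proof (rule edgeE)
  fix u v assume "e = {u, v}" "u \<in> V" "v \<in> V"
  then show ?thesis
    using assms(2) ncomp_insert_edge[OF finite_V] by (simp add: connects_doubleton_iff)
qed

text \<open>If adding e creates a broken circuit C - {m}, then e \<in> C and m < e; were m connected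
  by \<sigma>, the path C - {e} in \<sigma> + m would connect the endpoints of e already in \<sigma>.\<close>
lemma NBC_insert_fails_imp_smaller_unconnected:
  assumes \<sigma>: "\<sigma> \<in> NBC V E rk" and e: "e \<in> E" "\<not> connects \<sigma> e"
    and fails: "insert e \<sigma> \<notin> NBC V E rk"
  obtains m where "m \<in> E" "rk m < rk e" "\<not> connects \<sigma> m"
proof -
  have "insert e \<sigma> \<subseteq> E"
    using NBC_subset[OF \<sigma>] e by auto
  then obtain C where C: "is_cycle V E C" and bc: "C - {min_edge rk C} \<subseteq> insert e \<sigma>"
    using fails unfolding NBC_def broken_circuit_def by blast
  define m where "m = min_edge rk C"
  have "\<not> C - {m} \<subseteq> \<sigma>"
    using \<sigma> C unfolding NBC_def broken_circuit_def m_def by blast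
  then have eC: "e \<in> C" "e \<noteq> m"
    using bc m_def by auto
  have CE: "C \<subseteq> E"
    using C by (auto simp: is_cycle_def)
  have C_ne: "finite C" "C \<noteq> {}"
    using CE finite_E eC by (auto intro: finite_subset)
  have "m \<in> C" "rk m \<le> rk e"
    unfolding m_def using min_edge_mem[OF C_ne CE] min_edge_le[OF C_ne CE eC(1)] .
  moreover have "rk m \<noteq> rk e"
    using \<open>m \<in> C\<close> eC CE order unfolding edge_order_def by (metis inj_onD subsetD)
  ultimately have "m \<in> E" "rk m < rk e"
    using CE by auto
  moreover have "\<not> connects \<sigma> m"
  proof
    assume "connects \<sigma> m"
    moreover have "C - {e} \<subseteq> insert m \<sigma>"
      using bc m_def by auto
    then have "connects (insert m \<sigma>) e"
      by (rule connects_mono[OF cycle_minus_connects[OF C eC(1)]])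
    ultimately show False
      using e(2) connects_insertD by blast
  qed
  ultimately show ?thesis
    using that by blast
qed

end

lemma rtrancl_edge_rel_eq_if_connects:
  assumes "S \<subseteq> T" "\<And>e. e \<in> T \<Longrightarrow> connects S e"
  shows "(edge_rel S)\<^sup>* = (edge_rel T)\<^sup>*"
proof
  have "edge_rel T \<subseteq> (edge_rel S)\<^sup>*"
    using assms(2) connects_doubleton_iff by (fastforce simp: edge_rel_def[of T])
  then show "(edge_rel T)\<^sup>* \<subseteq> (edge_rel S)\<^sup>*"
    using rtrancl_subset_rtrancl by blast
qed (rule rtrancl_edge_rel_mono[OF assms(1)])

lemma on_fund_cycle_mono: "on_fund_cycle V E S i e \<Longrightarrow> S \<subseteq> T \<Longrightarrow> on_fund_cycle V E T i e"
  unfolding on_fund_cycle_def by blast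

definition toggle :: "'a set \<Rightarrow> 'a \<Rightarrow> 'a set" where
  "toggle \<sigma> k = (if k \<in> \<sigma> then \<sigma> - {k} else insert k \<sigma>)"

lemma toggle_toggle [simp]: "toggle (toggle \<sigma> k) k = \<sigma>"
  by (auto simp: toggle_def insert_absorb)

lemma toggle_neq: "toggle \<sigma> k \<noteq> \<sigma>"
  by (auto simp: toggle_def)

locale NBC_interval = ordered_graph V E rk
  for V :: "'a set" and E :: "'a set set" and rk :: "'a set \<Rightarrow> nat" +
  fixes \<pi> :: "'a set set"
begin

abbreviation Nabla :: "'a set set" where
  "Nabla \<equiv> nabla V E \<pi>"

lemma nabla_subset: "Nabla \<subseteq> E"
  by (auto simp: nabla_def)

lemma finite_nabla: "finite Nabla"
  using nabla_subset finite_E by (rule finite_subset)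

lemma nabla_not_connects: "e \<in> Nabla \<Longrightarrow> \<not> connects \<pi> e"
  using nabla_iff nabla_subset by blast

lemma connects_if_not_nabla: "e \<in> E \<Longrightarrow> e \<notin> Nabla \<Longrightarrow> connects \<pi> e"
  using nabla_iff by blast

definition pivot :: "'a set set \<Rightarrow> 'a set \<Rightarrow> bool" where
  "pivot \<sigma> e \<longleftrightarrow> (e \<notin> \<sigma> \<and> insert e \<sigma> \<in> NBC V E rk) \<or>
     (e \<in> \<sigma> \<and> (\<forall>i\<in>Nabla. rk i < rk e \<longrightarrow> i \<notin> \<sigma> \<longrightarrow> \<not> on_fund_cycle V E \<sigma> i e))"

definition first_pivot :: "'a set set \<Rightarrow> 'a set \<Rightarrow> bool" where
  "first_pivot \<sigma> k \<longleftrightarrow> k \<in> Nabla \<and> pivot \<sigma> k \<and> (\<forall>e\<in>Nabla. rk e < rk k \<longrightarrow> \<not> pivot \<sigma> e)"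

lemma connects_if_no_pivot_le:
  assumes \<sigma>: "\<sigma> \<in> NBC V E rk" "\<pi> \<subseteq> \<sigma>" and e: "e \<in> Nabla" "e \<notin> \<sigma>"
    and no_pivot: "\<And>f. f \<in> Nabla \<Longrightarrow> rk f \<le> rk e \<Longrightarrow> \<not> pivot \<sigma> f"
  shows "connects \<sigma> e"
  using e no_pivot
proof (induction "rk e" arbitrary: e rule: less_induct)
  case less
  show ?case
  proof (rule ccontr)
    assume unconnected: "\<not> connects \<sigma> e"
    have "insert e \<sigma> \<notin> NBC V E rk"
      using less.prems by (auto simp: pivot_def)
    then obtain m where m: "m \<in> E" "rk m < rk e" "\<not> connects \<sigma> m"
      using NBC_insert_fails_imp_smaller_unconnected[OF \<sigma>(1) _ unconnected] less.prems(1)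
        nabla_subset by blast
    have "m \<in> Nabla"
      using m \<sigma>(2) connects_mono nabla_iff by blast
    moreover have "m \<notin> \<sigma>"
      using m(3) connects_if_mem by blast
    ultimately have "connects \<sigma> m"
      using less.hyps[OF m(2)] less.prems(3) m(2) by simp
    with m(3) show False ..
  qed
qed

lemma connects_below_first_pivot:
  assumes "\<sigma> \<in> NBC V E rk" "\<pi> \<subseteq> \<sigma>" "first_pivot \<sigma> k" "e \<in> Nabla" "e \<notin> \<sigma>" "rk e < rk k"
  shows "connects \<sigma> e"
  using assms by (intro connects_if_no_pivot_le) (auto simp: first_pivot_def)

lemma toggle_NBC:
  assumes "\<sigma> \<in> NBC V E rk" "pivot \<sigma> k"
  shows "toggle \<sigma> k \<in> NBC V E rk"
  using assms NBC_subset_closed by (auto simp: toggle_def pivot_def)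

lemma toggle_above:
  assumes "\<pi> \<subseteq> \<sigma>" "k \<in> Nabla"
  shows "\<pi> \<subseteq> toggle \<sigma> k"
  using assms nabla_not_connects connects_if_mem by (auto simp: toggle_def)

lemma ncomp_toggle:
  assumes "\<sigma> \<in> NBC V E rk" "k \<in> Nabla" "pivot \<sigma> k"
  shows "(-1::int) ^ ncomp V (toggle \<sigma> k) = - ((-1) ^ ncomp V \<sigma>)"
proof -
  let ?S = "\<sigma> - {k}"
  have "insert k ?S \<in> NBC V E rk"
    using assms by (cases "k \<in> \<sigma>") (auto simp: pivot_def insert_absorb)
  then have "ncomp V ?S = Suc (ncomp V (insert k ?S))"
    using assms(2) nabla_subset by (intro ncomp_insert_unconnected NBC_insert_imp_not_connects) auto
  then show ?thesis
    by (cases "k \<in> \<sigma>") (auto simp: toggle_def insert_absorb)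
qed

lemma first_pivot_insert:
  assumes \<sigma>: "\<sigma> \<in> NBC V E rk" "\<pi> \<subseteq> \<sigma>" and k: "first_pivot \<sigma> k" "k \<notin> \<sigma>"
  shows "first_pivot (insert k \<sigma>) k"
proof -
  let ?\<tau> = "insert k \<sigma>"
  have k_NBC: "?\<tau> \<in> NBC V E rk"
    using k by (simp add: first_pivot_def pivot_def)
  have "\<not> on_fund_cycle V E ?\<tau> i k" if i: "i \<in> Nabla" "rk i < rk k" "i \<notin> ?\<tau>" for i
  proof
    assume "on_fund_cycle V E ?\<tau> i k"
    then obtain C where C: "is_cycle V E C" "C \<subseteq> ?\<tau> \<union> {i}" "k \<in> C"
      unfolding on_fund_cycle_def by blast
    have "C - {k} \<subseteq> insert i \<sigma>"
      using C(2) by auto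
    then have "connects (insert i \<sigma>) k"
      by (rule connects_mono[OF cycle_minus_connects[OF C(1,3)]])
    moreover have "connects \<sigma> i"
      using connects_below_first_pivot[OF \<sigma> k(1) i(1)] i(2,3) by simp
    ultimately have "connects \<sigma> k"
      by (rule connects_insertD)
    then show False
      using NBC_insert_imp_not_connects[OF k_NBC k(2)] by contradiction
  qed
  then have "pivot ?\<tau> k"
    by (simp add: pivot_def)
  moreover have "\<not> pivot ?\<tau> e" if e: "e \<in> Nabla" "rk e < rk k" for e
  proof -
    have "\<not> pivot \<sigma> e"
      using k(1) e by (simp add: first_pivot_def)
    moreover have "e \<noteq> k"
      using e(2) by blast
    ultimately show ?thesis
      using NBC_subset_closed[of "insert e ?\<tau>" "insert e \<sigma>"] e(2)
      by (auto simp: pivot_def dest: on_fund_cycle_mono[of _ _ \<sigma> _ _ ?\<tau>])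
  qed
  ultimately show ?thesis
    using k(1) by (simp add: first_pivot_def)
qed

lemma first_pivot_remove:
  assumes \<sigma>: "\<sigma> \<in> NBC V E rk" "\<pi> \<subseteq> \<sigma>" and k: "first_pivot \<sigma> k" "k \<in> \<sigma>"
  shows "first_pivot (\<sigma> - {k}) k"
proof -
  let ?\<tau> = "\<sigma> - {k}"
  have k_on_no_cycle: "\<not> on_fund_cycle V E \<sigma> i k" if "i \<in> Nabla" "rk i < rk k" "i \<notin> \<sigma>" for i
    using k that by (simp add: first_pivot_def pivot_def)
  have "pivot ?\<tau> k"
    using \<sigma>(1) k(2) by (simp add: pivot_def insert_absorb)
  moreover have "\<not> pivot ?\<tau> e" if e: "e \<in> Nabla" "rk e < rk k" for e
  proof (cases "e \<in> \<sigma>")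
    case True
    then obtain i where i: "i \<in> Nabla" "rk i < rk e" "i \<notin> \<sigma>" "on_fund_cycle V E \<sigma> i e"
      using k(1) e by (auto simp: first_pivot_def pivot_def)
    then obtain C where C: "is_cycle V E C" "C \<subseteq> \<sigma> \<union> {i}" "e \<in> C"
      unfolding on_fund_cycle_def by blast
    have "k \<notin> C"
      using k_on_no_cycle[OF i(1) _ i(3)] C i(2) e(2) unfolding on_fund_cycle_def by auto
    then have "on_fund_cycle V E ?\<tau> i e"
      using C unfolding on_fund_cycle_def by blast
    then show ?thesis
      using i True e(2) by (auto simp: pivot_def)
  next
    case False
    have "connects \<sigma> e"
      using connects_below_first_pivot[OF \<sigma> k(1) e(1) False e(2)] .
    then obtain C where C: "is_cycle V E C" "C \<subseteq> insert e \<sigma>" "e \<in> C"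
      using connects_imp_cycle NBC_subset[OF \<sigma>(1)] e(1) nabla_subset False by blast
    have "k \<notin> C"
      using k_on_no_cycle[OF e(1,2) False] C unfolding on_fund_cycle_def by auto
    then have "insert e ?\<tau> \<notin> NBC V E rk"
      using C cycle_not_subset_NBC by blast
    then show ?thesis
      using False by (simp add: pivot_def)
  qed
  ultimately show ?thesis
    using k(1) by (simp add: first_pivot_def)
qed

lemma first_pivot_toggle:
  "\<sigma> \<in> NBC V E rk \<Longrightarrow> \<pi> \<subseteq> \<sigma> \<Longrightarrow> first_pivot \<sigma> k \<Longrightarrow> first_pivot (toggle \<sigma> k) k"
  using first_pivot_insert first_pivot_remove by (simp add: toggle_def)

definition min_pivot :: "'a set set \<Rightarrow> 'a set" where
  "min_pivot \<sigma> = min_edge rk {e \<in> Nabla. pivot \<sigma> e}"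

lemma first_pivot_min_pivot:
  assumes "\<exists>e\<in>Nabla. pivot \<sigma> e"
  shows "first_pivot \<sigma> (min_pivot \<sigma>)"
proof -
  have "finite {e \<in> Nabla. pivot \<sigma> e}" "{e \<in> Nabla. pivot \<sigma> e} \<noteq> {}" "{e \<in> Nabla. pivot \<sigma> e} \<subseteq> E"
    using finite_nabla nabla_subset assms by auto
  from min_edge_mem[OF this] min_edge_le[OF this] show ?thesis
    unfolding first_pivot_def min_pivot_def by fastforce
qed

lemma min_pivot_eqI: "first_pivot \<sigma> k \<Longrightarrow> min_pivot \<sigma> = k"
  unfolding min_pivot_def first_pivot_def using nabla_subset
  by (intro min_edge_eqI) (auto simp: not_le)

lemma connects_if_no_pivot:
  assumes \<sigma>: "\<sigma> \<in> NBC V E rk" "\<pi> \<subseteq> \<sigma>" and no_pivot: "\<forall>f\<in>Nabla. \<not> pivot \<sigma> f" and e: "e \<in> E"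
  shows "connects \<sigma> e"
proof (cases "e \<in> Nabla")
  case True
  then show ?thesis
    using \<sigma> no_pivot connects_if_no_pivot_le connects_if_mem by blast
next
  case False
  then show ?thesis
    using connects_if_not_nabla[OF e] connects_mono \<sigma>(2) by blast
qed

lemma ncomp_eq_if_no_pivot:
  assumes "\<sigma> \<in> NBC V E rk" "\<pi> \<subseteq> \<sigma>" "\<forall>f\<in>Nabla. \<not> pivot \<sigma> f"
  shows "ncomp V \<sigma> = ncomp V E"
proof -
  have "(edge_rel \<sigma>)\<^sup>* = (edge_rel E)\<^sup>*"
    using assms NBC_subset connects_if_no_pivot by (intro rtrancl_edge_rel_eq_if_connects)
  then show ?thesis
    by (simp add: ncomp_def conn_eq)
qed

lemma max_NBC_above_iff:
  assumes \<sigma>: "\<sigma> \<in> NBC V E rk" "\<pi> \<subseteq> \<sigma>"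
  shows "max_NBC_above V E rk \<pi> \<sigma> \<longleftrightarrow> (\<forall>e\<in>Nabla. e \<notin> \<sigma> \<longrightarrow> insert e \<sigma> \<notin> NBC V E rk)"
proof
  assume "max_NBC_above V E rk \<pi> \<sigma>"
  then show "\<forall>e\<in>Nabla. e \<notin> \<sigma> \<longrightarrow> insert e \<sigma> \<notin> NBC V E rk"
    using \<sigma>(2) unfolding max_NBC_above_def by blast
next
  assume maximal: "\<forall>e\<in>Nabla. e \<notin> \<sigma> \<longrightarrow> insert e \<sigma> \<notin> NBC V E rk"
  have "T = \<sigma>" if T: "T \<in> NBC V E rk" "\<sigma> \<subseteq> T" for T
  proof (rule ccontr)
    assume "T \<noteq> \<sigma>"
    then obtain e where e: "e \<in> T" "e \<notin> \<sigma>"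
      using T(2) by blast
    then have "e \<in> E" "insert e \<sigma> \<in> NBC V E rk"
      using T NBC_subset NBC_subset_closed by auto
    moreover from this have "\<not> connects \<pi> e"
      using NBC_insert_imp_not_connects[OF _ e(2)] connects_mono \<sigma>(2) by blast
    ultimately show False
      using maximal e(2) nabla_iff by blast
  qed
  then show "max_NBC_above V E rk \<pi> \<sigma>"
    using \<sigma> unfolding max_NBC_above_def by blast
qed

lemma good_T_iff:
  "good_T V E rk \<pi> \<sigma> \<longleftrightarrow>
     (\<forall>e\<in>Nabla. e \<in> \<sigma> \<longrightarrow> (\<exists>i\<in>Nabla. rk i < rk e \<and> i \<notin> \<sigma> \<and> on_fund_cycle V E \<sigma> i e))"
proof (cases "Nabla = {}")
  case False
  let ?m = "min_edge rk Nabla"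
  have m: "?m \<in> Nabla" "\<And>f. f \<in> Nabla \<Longrightarrow> rk ?m \<le> rk f"
    using min_edge_mem min_edge_le finite_nabla False nabla_subset by blast+
  show ?thesis
  proof
    assume good: "good_T V E rk \<pi> \<sigma>"
    then have "?m \<notin> \<sigma>"
      using False by (simp add: good_T_def)
    with good show "\<forall>e\<in>Nabla. e \<in> \<sigma> \<longrightarrow> (\<exists>i\<in>Nabla. rk i < rk e \<and> i \<notin> \<sigma> \<and> on_fund_cycle V E \<sigma> i e)"
      unfolding good_T_def by metis
  next
    assume R: "\<forall>e\<in>Nabla. e \<in> \<sigma> \<longrightarrow> (\<exists>i\<in>Nabla. rk i < rk e \<and> i \<notin> \<sigma> \<and> on_fund_cycle V E \<sigma> i e)"
    then have "?m \<notin> \<sigma>"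
      using m by (meson not_le)
    with R show "good_T V E rk \<pi> \<sigma>"
      unfolding good_T_def by blast
  qed
qed (simp add: good_T_def)

lemma no_pivot_iff:
  assumes "\<sigma> \<in> NBC V E rk" "\<pi> \<subseteq> \<sigma>"
  shows "(\<forall>e\<in>Nabla. \<not> pivot \<sigma> e) \<longleftrightarrow> max_NBC_above V E rk \<pi> \<sigma> \<and> good_T V E rk \<pi> \<sigma>"
  unfolding max_NBC_above_iff[OF assms] good_T_iff pivot_def by blast

lemma alternating_sum_NBC_above:
  "(\<Sum>\<sigma> \<in> {\<sigma> \<in> NBC V E rk. \<pi> \<subseteq> \<sigma>}. (-1::int) ^ ncomp V \<sigma>)
     = (-1) ^ ncomp V E * int (card {T. max_NBC_above V E rk \<pi> T \<and> good_T V E rk \<pi> T})"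
proof -
  let ?A = "{\<sigma> \<in> NBC V E rk. \<pi> \<subseteq> \<sigma>}"
  let ?F = "{\<sigma> \<in> ?A. \<forall>e\<in>Nabla. \<not> pivot \<sigma> e}"
  let ?f = "\<lambda>\<sigma>. (-1::int) ^ ncomp V \<sigma>"
  have "finite ?A"
    using finite_E NBC_subset by (auto intro: finite_subset[of _ "Pow E"])
  have pivoted: "sum ?f (?A - ?F) = 0"
  proof (rule sum_involution_eq_0[where h = "\<lambda>\<sigma>. toggle \<sigma> (min_pivot \<sigma>)"])
    fix \<sigma> assume "\<sigma> \<in> ?A - ?F"
    then have \<sigma>: "\<sigma> \<in> NBC V E rk" "\<pi> \<subseteq> \<sigma>" and k: "first_pivot \<sigma> (min_pivot \<sigma>)"
      using first_pivot_min_pivot by auto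
    let ?\<tau> = "toggle \<sigma> (min_pivot \<sigma>)"
    have k': "first_pivot ?\<tau> (min_pivot \<sigma>)"
      using first_pivot_toggle[OF \<sigma> k] .
    then show "?\<tau> \<in> ?A - ?F"
      using toggle_NBC toggle_above \<sigma> k by (auto simp: first_pivot_def)
    show "toggle ?\<tau> (min_pivot ?\<tau>) = \<sigma>"
      using min_pivot_eqI[OF k'] by simp
    show "?f ?\<tau> + ?f \<sigma> = 0"
      using ncomp_toggle \<sigma>(1) k by (simp add: first_pivot_def)
    show "?\<tau> \<noteq> \<sigma>"
      by (rule toggle_neq)
  qed
  have "sum ?f ?A = sum ?f (?A - ?F) + sum ?f ?F"
    using sum.subset_diff[of ?F ?A ?f] \<open>finite ?A\<close> by blast
  also have "\<dots> = (-1) ^ ncomp V E * int (card ?F)"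
    using pivoted ncomp_eq_if_no_pivot by simp
  also have "?F = {T. max_NBC_above V E rk \<pi> T \<and> good_T V E rk \<pi> T}"
    using no_pivot_iff by (auto simp: max_NBC_above_def)
  finally show ?thesis .
qed

end

theorem lemma3p4:
  fixes V :: "'a set" and E :: "'a set set" and rk :: "'a set \<Rightarrow> nat" and \<pi> :: "'a set set"
  assumes "simple_graph V E"
    and "edge_order E rk"
    and "\<pi> \<in> NBC V E rk"
  shows "(\<Sum>\<sigma> \<in> {\<sigma> \<in> NBC V E rk. \<pi> \<subseteq> \<sigma>}. (-1::int) ^ ncomp V \<sigma>)
         = (-1::int) ^ ncomp V E * int (card {T. max_NBC_above V E rk \<pi> T \<and> good_T V E rk \<pi> T})"
proof -
  interpret NBC_interval V E rk \<pi>
    using assms(1,2) by unfold_locales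
  show ?thesis
    by (rule alternating_sum_NBC_above)
qed

end
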